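(* Let $N\ge1$ and consider pairs $(b,c)\in\mathbb{Z}_{\ge0}^2$ with $b+c\le 2N$. Call $(b',c')\in\mathbb{Z}_{\ge0}^2$ with $b'+c'\le2N$ a neighbor of $(b,c)$, $(b',c')\ne(b,c)$, if either $(b-b')(c-c')\ge0$ and $|b-b'|+|c-c'|\le2$, or $(b-b')(c-c')<0$ and $\max\{|b-b'|,|c-c'|\}\le2$. Define $\chi^2_{TDT}(b,c)=\frac{(b-c)^2}{b+c}$ for $b+c>0$ and $\chi^2_{TDT}(0,0)=0$, and $LS((b,c))=\max_{(b',c')\text{ neighbor of }(b,c)}|\chi^2_{TDT}(b,c)-\chi^2_{TDT}(b',c')|$. Then $LS((b,c))>6$ whenever $$0\le c<\tfrac{b-8}{7}\ \ \lor\ \ 2\le b<\tfrac{c+8}{7}\ \ \lor\ \ 0\le b<\tfrac{c-8}{7}\ \ \lor\ \ 2\le c<\tfrac{b+8}{7}.$$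
   Context: Here $b$ and $c$ are the off-diagonal counts of the $2\times2$ transmission-disequilibrium-test table classifying $2N$ parents of $N$ families (transmitted allele $A_1$/non-transmitted $A_2$ count $b$, transmitted $A_2$/non-transmitted $A_1$ count $c$); neighboring datasets differ in one family, which corresponds to the neighbor relation on $(b,c)$ given in the claim. *)

theory Defs
  imports Main Complex_Main
begin

definition chi2_tdt :: "int \<Rightarrow> int \<Rightarrow> real" where
  "chi2_tdt b c = (if b + c > 0 then (real_of_int (b - c))^2 / real_of_int (b + c) else 0)"

definition tdt_neighbor :: "nat \<Rightarrow> int \<Rightarrow> int \<Rightarrow> int \<Rightarrow> int \<Rightarrow> bool" where
  "tdt_neighbor N b c b' c' \<longleftrightarrow>
     0 \<le> b' \<and> 0 \<le> c' \<and> b' + c' \<le> 2 * int N \<and> (b', c') \<noteq> (b, c) \<and>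
     (((b - b') * (c - c') \<ge> 0 \<and> \<bar>b - b'\<bar> + \<bar>c - c'\<bar> \<le> 2) \<or>
      ((b - b') * (c - c') < 0 \<and> max \<bar>b - b'\<bar> \<bar>c - c'\<bar> \<le> 2))"

definition LS :: "nat \<Rightarrow> int \<Rightarrow> int \<Rightarrow> real" where
  "LS N b c = Max {\<bar>chi2_tdt b c - chi2_tdt b' c'\<bar> | b' c'. tdt_neighbor N b c b' c'}"

end

theory Submission
  imports Defs
begin

text \<open>Moving two parents from the transmitted-A1 cell to the transmitted-A2 cell keeps \<open>b + c\<close>
  fixed and lowers \<open>b - c\<close> by 4, which changes the statistic by \<open>(8(b - c) - 16)/(b + c)\<close>.
  In the region \<open>c < (b - 8)/7\<close> this exceeds 6, and in the region \<open>2 \<le> b < (c + 8)/7\<close> it is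
  below -6. The other two regions follow by the symmetry exchanging \<open>b\<close> and \<open>c\<close>.\<close>

lemma chi2_tdt_commute: "chi2_tdt c b = chi2_tdt b c"
  unfolding chi2_tdt_def by (simp add: add.commute power2_commute)

lemma tdt_neighbor_commute: "tdt_neighbor N c b c' b' \<longleftrightarrow> tdt_neighbor N b c b' c'"
  unfolding tdt_neighbor_def by (auto simp: mult.commute max.commute add.commute)

lemma LS_commute: "LS N c b = LS N b c"
proof -
  have "{\<bar>chi2_tdt c b - chi2_tdt x y\<bar> | x y. tdt_neighbor N c b x y}
          \<subseteq> {\<bar>chi2_tdt b c - chi2_tdt x y\<bar> | x y. tdt_neighbor N b c x y}" for b c
  proof
    fix z assume "z \<in> {\<bar>chi2_tdt c b - chi2_tdt x y\<bar> | x y. tdt_neighbor N c b x y}"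
    then obtain x y where "z = \<bar>chi2_tdt c b - chi2_tdt x y\<bar>" and "tdt_neighbor N c b x y"
      by blast
    then have "z = \<bar>chi2_tdt b c - chi2_tdt y x\<bar>" and "tdt_neighbor N b c y x"
      by (simp_all only: chi2_tdt_commute[of b c] chi2_tdt_commute[of y x] tdt_neighbor_commute)
    then show "z \<in> {\<bar>chi2_tdt b c - chi2_tdt x y\<bar> | x y. tdt_neighbor N b c x y}"
      by blast
  qed
  then show ?thesis
    unfolding LS_def by (intro arg_cong[where f = Max] subset_antisym)
qed

lemma finite_tdt_neighbors: "finite {(b', c'). tdt_neighbor N b c b' c'}"
proof (rule finite_subset)
  show "{(b', c'). tdt_neighbor N b c b' c'} \<subseteq> {0..2 * int N} \<times> {0..2 * int N}"
    unfolding tdt_neighbor_def by auto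
qed simp

lemma LS_ge:
  assumes "tdt_neighbor N b c b' c'"
  shows "\<bar>chi2_tdt b c - chi2_tdt b' c'\<bar> \<le> LS N b c"
proof -
  let ?f = "\<lambda>(x, y). \<bar>chi2_tdt b c - chi2_tdt x y\<bar>"
  have "{\<bar>chi2_tdt b c - chi2_tdt x y\<bar> | x y. tdt_neighbor N b c x y}
          = ?f ` {(x, y). tdt_neighbor N b c x y}"
    by auto
  then have "finite {\<bar>chi2_tdt b c - chi2_tdt x y\<bar> | x y. tdt_neighbor N b c x y}"
    using finite_tdt_neighbors by simp
  then show ?thesis
    unfolding LS_def using assms by (blast intro: Max_ge)
qed

lemma chi2_tdt_diff_shift:
  fixes b c :: int
  assumes "b + c > 0"
  shows "chi2_tdt b c - chi2_tdt (b - 2) (c + 2) = (8 * real_of_int (b - c) - 16) / real_of_int (b + c)"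
proof -
  have "chi2_tdt b c - chi2_tdt (b - 2) (c + 2) =
          ((real_of_int (b - c))\<^sup>2 - (real_of_int (b - c) - 4)\<^sup>2) / real_of_int (b + c)"
    using assms unfolding chi2_tdt_def by (simp add: diff_divide_distrib algebra_simps)
  also have "\<dots> = (8 * real_of_int (b - c) - 16) / real_of_int (b + c)"
    by (simp add: power2_eq_square algebra_simps)
  finally show ?thesis .
qed

lemma LS_gt_6_if_shift:
  fixes b c :: int
  assumes "2 \<le> b" and "0 \<le> c" and "b + c \<le> 2 * int N"
    and "\<bar>8 * (b - c) - 16\<bar> > 6 * (b + c)"
  shows "LS N b c > 6"
proof -
  have neighbor: "tdt_neighbor N b c (b - 2) (c + 2)"
    using assms(1-3) unfolding tdt_neighbor_def by simp
  have pos: "real_of_int (b + c) > 0"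
    using assms(1,2) by simp
  have "real_of_int (6 * (b + c)) < real_of_int \<bar>8 * (b - c) - 16\<bar>"
    using assms(4) by (simp only: of_int_less_iff)
  then have "\<bar>(8 * real_of_int (b - c) - 16) / real_of_int (b + c)\<bar> > 6"
    using pos by (simp add: abs_divide pos_less_divide_eq mult.commute)
  then have "\<bar>chi2_tdt b c - chi2_tdt (b - 2) (c + 2)\<bar> > 6"
    using assms(1,2) by (simp add: chi2_tdt_diff_shift)
  then show ?thesis
    using LS_ge[OF neighbor] by linarith
qed

theorem lemma2:
  fixes N :: nat and b c :: int
  assumes "N \<ge> 1" and "0 \<le> b" and "0 \<le> c" and "b + c \<le> 2 * int N"
    and "(0 \<le> c \<and> real_of_int c < (real_of_int b - 8) / 7) \<or>
         (2 \<le> b \<and> real_of_int b < (real_of_int c + 8) / 7) \<or>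
         (0 \<le> b \<and> real_of_int b < (real_of_int c - 8) / 7) \<or>
         (2 \<le> c \<and> real_of_int c < (real_of_int b + 8) / 7)"
  shows "LS N b c > 6"
proof -
  have "7 * c < b - 8 \<or> (2 \<le> b \<and> 7 * b < c + 8) \<or> 7 * b < c - 8 \<or> (2 \<le> c \<and> 7 * c < b + 8)"
  proof -
    have "real_of_int (7 * c) < real_of_int (b - 8) \<or>
          (2 \<le> b \<and> real_of_int (7 * b) < real_of_int (c + 8)) \<or>
          real_of_int (7 * b) < real_of_int (c - 8) \<or>
          (2 \<le> c \<and> real_of_int (7 * c) < real_of_int (b + 8))"
      using assms(5) by (simp add: field_simps) blast
    then show ?thesis
      by (simp only: of_int_less_iff)
  qed
  then consider "2 \<le> b" "\<bar>8 * (b - c) - 16\<bar> > 6 * (b + c)"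
    | "2 \<le> c" "\<bar>8 * (c - b) - 16\<bar> > 6 * (c + b)"
    using assms(2,3) by (elim disjE) (auto simp: abs_if)
  then show ?thesis
  proof cases
    case 1
    then show ?thesis using assms(3,4) by (intro LS_gt_6_if_shift)
  next
    case 2
    then have "LS N c b > 6"
      using assms(2,4) by (intro LS_gt_6_if_shift) simp_all
    then show ?thesis by (simp add: LS_commute)
  qed
qed

end
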